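(* Let $A,B,C>0$ and $q>1$, and let $f(t)=At-\frac Bt-Ct^q$ and $g(t)=At^2+B-Cqt^{q+1}$ for $t\in(0,+\infty)$. Then there exist $\bar t,t^-,t^+$ such that (i) $0<t^+<\bar t<t^-$ and $f(t^+)=f(t^-)=0$; (ii) $f'(t^+)>0$ and $f'(t^-)<0$; (iii) $g(t)>0$ on $(0,\bar t)$ and $g(t)<0$ on $(\bar t,+\infty)$, if and only if $$\frac{(q-1)^{\frac{q-1}2}}{(q+1)^{\frac{q+1}2}}\cdot\frac{A^{\frac{q+1}2}}{B^{\frac{q-1}2}}>\frac C2.$$ *)

theory Defs
  imports "HOL-Analysis.Analysis"
begin

end

theory Submission
  imports Defs "HOL-Real_Asymp.Real_Asymp"
begin

(* We have f' = phi with phi t = A + B/t^2 - C q t^(q-1), and g t = t^2 phi t. Since phi decreases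
   strictly from +infinity to -infinity, it has a unique zero tbar, g changes sign exactly there,
   and f attains its maximum at tbar. As f tends to -infinity at 0 and at infinity, the zeros
   tp < tbar < tm exist iff f tbar > 0, i.e. iff C t^(q+1) < A t^2 - B for some t > 0.
   By Bernoulli's inequality, (A t^2 - B) / t^(q+1) is maximal at t = sqrt (B (q+1) / (A (q-1))),
   where it equals twice the constant on the right-hand side. *)

lemma Bernoulli_inequality_powr:
  fixes u p :: real
  assumes "u > 0" and "p \<ge> 1"
  shows "1 + p * (u - 1) \<le> u powr p"
proof -
  have "p * (u - 1) \<le> u powr p - 1 powr p"
    using assms
    by (intro convex_on_imp_above_tangent[where A = "{0<..}"] powr_convex)
       (auto intro!: derivative_eq_intros simp: interior_open)
  then show ?thesis by simp
qed

lemma strict_mono_on_if_deriv_pos: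
  fixes f \<phi> :: "real \<Rightarrow> real"
  assumes deriv: "\<And>t. t \<in> {a..b} \<Longrightarrow> (f has_real_derivative \<phi> t) (at t)"
    and pos: "\<And>t. t \<in> {a<..<b} \<Longrightarrow> \<phi> t > 0"
  shows "strict_mono_on {a..b} f"
proof (rule strict_mono_onI)
  fix s t assume st: "s \<in> {a..b}" "t \<in> {a..b}" "s < t"
  show "f s < f t"
  proof (rule DERIV_pos_imp_increasing_open[OF \<open>s < t\<close>])
    fix x assume "s < x" "x < t"
    with st show "\<exists>y. (f has_real_derivative y) (at x) \<and> y > 0"
      by (intro exI[of _ "\<phi> x"] conjI deriv pos) auto
  next
    show "continuous_on {s..t} f"
      using st by (intro DERIV_atLeastAtMost_imp_continuous_on)
        (meson deriv atLeastAtMost_iff order_trans)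
  qed
qed

lemma strict_antimono_on_if_deriv_neg:
  fixes f \<phi> :: "real \<Rightarrow> real"
  assumes deriv: "\<And>t. t \<in> {a..b} \<Longrightarrow> (f has_real_derivative \<phi> t) (at t)"
    and neg: "\<And>t. t \<in> {a<..<b} \<Longrightarrow> \<phi> t < 0"
  shows "strict_antimono_on {a..b} f"
proof (rule monotone_onI)
  fix s t assume st: "s \<in> {a..b}" "t \<in> {a..b}" "s < t"
  show "f t < f s"
  proof (rule DERIV_neg_imp_decreasing_open[OF \<open>s < t\<close>])
    fix x assume "s < x" "x < t"
    with st show "\<exists>y. (f has_real_derivative y) (at x) \<and> y < 0"
      by (intro exI[of _ "\<phi> x"] conjI deriv neg) auto
  next
    show "continuous_on {s..t} f"
      using st by (intro DERIV_atLeastAtMost_imp_continuous_on)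
        (meson deriv atLeastAtMost_iff order_trans)
  qed
qed

lemma strict_antimono_on_sign_change:
  fixes \<phi> :: "real \<Rightarrow> real"
  assumes cont: "continuous_on {0<..} \<phi>" and decr: "strict_antimono_on {0<..} \<phi>"
    and near_0: "\<forall>\<^sub>F t in at_right 0. \<phi> t > 0"
    and near_top: "\<forall>\<^sub>F t in at_top. \<phi> t < 0"
  obtains c where "c > 0" and "\<And>t. 0 < t \<Longrightarrow> t < c \<Longrightarrow> \<phi> t > 0"
    and "\<And>t. c < t \<Longrightarrow> \<phi> t < 0"
proof -
  obtain a where a: "a > 0" "\<phi> a > 0"
    using eventually_happens'[OF _ eventually_conj[OF eventually_at_right_less near_0]] by auto
  obtain b where b: "b > 0" "\<phi> b < 0"
    using eventually_happens'[OF _ eventually_conj[OF eventually_gt_at_top near_top]] by auto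
  have "a < b"
  proof (rule ccontr)
    assume "\<not> a < b"
    then have "\<phi> a \<le> \<phi> b"
      using a b monotone_onD[OF decr, of b a] by (cases "a = b") auto
    with a b show False by simp
  qed
  moreover have "continuous_on {a..b} \<phi>"
    by (rule continuous_on_subset[OF cont]) (use a in auto)
  ultimately obtain c where c: "a \<le> c" "c \<le> b" "\<phi> c = 0"
    using IVT2'[of \<phi> b 0 a] a b by auto
  show thesis
  proof
    show "c > 0" using a c by simp
    show "\<phi> t > 0" if "0 < t" "t < c" for t
      using monotone_onD[OF decr _ _ \<open>t < c\<close>] that c \<open>c > 0\<close> by simp
    show "\<phi> t < 0" if "c < t" for t
      using monotone_onD[OF decr _ _ \<open>c < t\<close>] that c \<open>c > 0\<close> by simp
  qed
qed

lemma two_zeros_iff_exists_pos: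
  fixes f \<phi> :: "real \<Rightarrow> real"
  assumes deriv: "\<And>t. t > 0 \<Longrightarrow> (f has_real_derivative \<phi> t) (at t)"
    and cont: "continuous_on {0<..} \<phi>" and decr: "strict_antimono_on {0<..} \<phi>"
    and \<phi>_near_0: "\<forall>\<^sub>F t in at_right 0. \<phi> t > 0"
    and \<phi>_near_top: "\<forall>\<^sub>F t in at_top. \<phi> t < 0"
    and f_near_0: "\<forall>\<^sub>F t in at_right 0. f t < 0"
    and f_near_top: "\<forall>\<^sub>F t in at_top. f t < 0"
  shows "(\<exists>tbar tm tp. 0 < tp \<and> tp < tbar \<and> tbar < tm \<and> f tp = 0 \<and> f tm = 0 \<and>
            \<phi> tp > 0 \<and> \<phi> tm < 0 \<and>
            (\<forall>t. 0 < t \<and> t < tbar \<longrightarrow> \<phi> t > 0) \<and> (\<forall>t. tbar < t \<longrightarrow> \<phi> t < 0))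
         \<longleftrightarrow> (\<exists>t>0. f t > 0)"
proof
  assume "\<exists>tbar tm tp. 0 < tp \<and> tp < tbar \<and> tbar < tm \<and> f tp = 0 \<and> f tm = 0 \<and>
            \<phi> tp > 0 \<and> \<phi> tm < 0 \<and>
            (\<forall>t. 0 < t \<and> t < tbar \<longrightarrow> \<phi> t > 0) \<and> (\<forall>t. tbar < t \<longrightarrow> \<phi> t < 0)"
  then obtain tbar tp where tp: "0 < tp" "tp < tbar" "f tp = 0"
    and pos: "\<forall>t. 0 < t \<and> t < tbar \<longrightarrow> \<phi> t > 0" by blast
  have "strict_mono_on {tp..tbar} f"
    using tp pos by (intro strict_mono_on_if_deriv_pos[where \<phi> = \<phi>] deriv) auto
  then have "f tp < f tbar"
    using strict_mono_onD[of _ f tp tbar] tp by auto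
  then show "\<exists>t>0. f t > 0"
    using tp by (intro exI[of _ tbar]) auto
next
  assume "\<exists>t>0. f t > 0"
  then obtain t\<^sub>1 where t\<^sub>1: "t\<^sub>1 > 0" "f t\<^sub>1 > 0" by blast
  obtain c where c: "c > 0" and pos: "\<And>t. 0 < t \<Longrightarrow> t < c \<Longrightarrow> \<phi> t > 0"
    and neg: "\<And>t. c < t \<Longrightarrow> \<phi> t < 0"
    using strict_antimono_on_sign_change[OF cont decr \<phi>_near_0 \<phi>_near_top] by blast
  have f_incr: "strict_mono_on {s..c} f" if "s > 0" for s
    using that pos by (intro strict_mono_on_if_deriv_pos[where \<phi> = \<phi>] deriv) auto
  have f_decr: "strict_antimono_on {c..s} f" for s
    using c neg by (intro strict_antimono_on_if_deriv_neg[where \<phi> = \<phi>] deriv) auto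
  have f_le: "f t \<le> f c" if "t > 0" for t
  proof (cases "t \<le> c")
    case True
    then show ?thesis using strict_mono_on_leD[OF f_incr[OF \<open>t > 0\<close>]] by simp
  next
    case False
    then show ?thesis using monotone_onD[OF f_decr[of t], of c t] by simp
  qed
  have fc: "f c > 0"
    using f_le[OF t\<^sub>1(1)] t\<^sub>1 by simp
  obtain a where a: "0 < a" "a < c" "f a < 0"
    using eventually_happens'[OF _ eventually_conj[OF eventually_at_right_real[OF c] f_near_0]]
    by auto
  obtain b where b: "c < b" "f b < 0"
    using eventually_happens'[OF _ eventually_conj[OF eventually_gt_at_top f_near_top]] by auto
  have cont_f: "continuous_on {s..s'} f" if "s > 0" for s s'
    using that deriv by (intro DERIV_atLeastAtMost_imp_continuous_on) (meson less_le_trans)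
  obtain tp where tp: "a \<le> tp" "tp \<le> c" "f tp = 0"
    using IVT'[of f a 0 c] a fc cont_f[OF \<open>a > 0\<close>] by auto
  obtain tm where tm: "c \<le> tm" "tm \<le> b" "f tm = 0"
    using IVT2'[of f b 0 c] b fc cont_f[OF c] by auto
  have "tp \<noteq> c" "tm \<noteq> c"
    using tp tm fc by auto
  then show "\<exists>tbar tm tp. 0 < tp \<and> tp < tbar \<and> tbar < tm \<and> f tp = 0 \<and> f tm = 0 \<and>
            \<phi> tp > 0 \<and> \<phi> tm < 0 \<and>
            (\<forall>t. 0 < t \<and> t < tbar \<longrightarrow> \<phi> t > 0) \<and> (\<forall>t. tbar < t \<longrightarrow> \<phi> t < 0)"
    using a tp tm pos neg by (intro exI[of _ c] exI[of _ tm] exI[of _ tp]) auto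
qed

lemma critical_constant_eq:
  fixes A B q :: real
  assumes A: "A > 0" and B: "B > 0" and q: "q > 1"
  shows "((q - 1) powr ((q - 1) / 2) / (q + 1) powr ((q + 1) / 2))
           * (A powr ((q + 1) / 2) / B powr ((q - 1) / 2))
       = B / ((q - 1) * sqrt (B * (q + 1) / (A * (q - 1))) powr (q + 1))"
    (is "?\<kappa> = B / ((q - 1) * ?t\<^sub>0 powr (q + 1))")
proof (rule ln_inj_iff[THEN iffD1])
  have ln_\<kappa>: "ln ?\<kappa> = (q - 1) / 2 * ln (q - 1) - (q + 1) / 2 * ln (q + 1)
                          + (q + 1) / 2 * ln A - (q - 1) / 2 * ln B"
    using A B q by (simp add: ln_mult ln_div)
  have ln_rhs: "ln (B / ((q - 1) * ?t\<^sub>0 powr (q + 1))) = ln B - ln (q - 1) - (q + 1) * ln ?t\<^sub>0"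
    using A B q by (simp add: ln_mult ln_div)
  have ln_t\<^sub>0: "ln ?t\<^sub>0 = (ln B + ln (q + 1) - ln A - ln (q - 1)) / 2"
    using A B q by (simp add: ln_sqrt ln_mult ln_div)
  show "ln ?\<kappa> = ln (B / ((q - 1) * ?t\<^sub>0 powr (q + 1)))"
    unfolding ln_\<kappa> ln_rhs ln_t\<^sub>0 by (simp add: algebra_simps add_divide_distrib diff_divide_distrib)
qed (use A B q in simp_all)

lemma quadratic_minus_le_powr:
  fixes A B q :: real
  assumes A: "A > 0" and B: "B > 0" and q: "q > 1"
  defines "\<kappa> \<equiv> ((q - 1) powr ((q - 1) / 2) / (q + 1) powr ((q + 1) / 2))
                 * (A powr ((q + 1) / 2) / B powr ((q - 1) / 2))"
  shows "\<And>t. t > 0 \<Longrightarrow> A * t\<^sup>2 - B \<le> 2 * \<kappa> * t powr (q + 1)"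
    and "\<exists>t>0. A * t\<^sup>2 - B = 2 * \<kappa> * t powr (q + 1)"
proof -
  define t\<^sub>0 where "t\<^sub>0 = sqrt (B * (q + 1) / (A * (q - 1)))"
  have t\<^sub>0: "t\<^sub>0 > 0"
    unfolding t\<^sub>0_def using A B q by simp
  have \<kappa>_eq: "\<kappa> = B / ((q - 1) * t\<^sub>0 powr (q + 1))"
    unfolding \<kappa>_def t\<^sub>0_def using A B q by (rule critical_constant_eq)
  have At\<^sub>0: "A * t\<^sub>0\<^sup>2 = B * (q + 1) / (q - 1)"
    unfolding t\<^sub>0_def using A B q by simp
  show "\<exists>t>0. A * t\<^sup>2 - B = 2 * \<kappa> * t powr (q + 1)"
    using t\<^sub>0 q by (intro exI[of _ t\<^sub>0]) (simp add: \<kappa>_eq At\<^sub>0 field_simps)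
  show "A * t\<^sup>2 - B \<le> 2 * \<kappa> * t powr (q + 1)" if t: "t > 0" for t
  proof -
    define s where "s = t / t\<^sub>0"
    have s: "s > 0"
      unfolding s_def using t t\<^sub>0 by simp
    have exponent: "2 * ((q + 1) / 2) = q + 1"
      by simp
    have "(s\<^sup>2) powr ((q + 1) / 2) = (s powr 2) powr ((q + 1) / 2)"
      using s by simp
    also have "\<dots> = s powr (q + 1)"
      by (simp only: powr_powr exponent)
    also have "\<dots> = t powr (q + 1) / t\<^sub>0 powr (q + 1)"
      unfolding s_def using t t\<^sub>0 by (simp add: powr_divide)
    finally have bernoulli: "1 + (q + 1) / 2 * (s\<^sup>2 - 1) \<le> t powr (q + 1) / t\<^sub>0 powr (q + 1)"
      using Bernoulli_inequality_powr[of "s\<^sup>2" "(q + 1) / 2"] s q by simp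
    have "A * t\<^sup>2 = A * t\<^sub>0\<^sup>2 * s\<^sup>2"
      unfolding s_def using t\<^sub>0 by (simp add: field_simps)
    then have "A * t\<^sup>2 - B = 2 * B / (q - 1) * (1 + (q + 1) / 2 * (s\<^sup>2 - 1))"
      unfolding At\<^sub>0 using q by (simp add: field_simps)
    also have "\<dots> \<le> 2 * B / (q - 1) * (t powr (q + 1) / t\<^sub>0 powr (q + 1))"
      using bernoulli B q by (intro mult_left_mono) auto
    also have "\<dots> = 2 * \<kappa> * t powr (q + 1)"
      by (simp add: \<kappa>_eq)
    finally show ?thesis .
  qed
qed

lemma exists_powr_less_quadratic_iff:
  fixes A B C q :: real
  assumes "A > 0" and "B > 0" and "q > 1"
  shows "(\<exists>t>0. C * t powr (q + 1) < A * t\<^sup>2 - B) \<longleftrightarrow>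
         ((q - 1) powr ((q - 1) / 2) / (q + 1) powr ((q + 1) / 2))
           * (A powr ((q + 1) / 2) / B powr ((q - 1) / 2)) > C / 2"
  (is "_ \<longleftrightarrow> ?\<kappa> > C / 2")
proof
  assume "\<exists>t>0. C * t powr (q + 1) < A * t\<^sup>2 - B"
  then obtain t where "t > 0" "C * t powr (q + 1) < A * t\<^sup>2 - B" by blast
  with quadratic_minus_le_powr(1)[OF assms] have "C * t powr (q + 1) < 2 * ?\<kappa> * t powr (q + 1)"
    by fastforce
  then have "C < 2 * ?\<kappa>"
    by (rule mult_right_less_imp_less) simp
  then show "?\<kappa> > C / 2" by linarith
next
  assume "?\<kappa> > C / 2"
  obtain t where t: "t > 0" and eq: "A * t\<^sup>2 - B = 2 * ?\<kappa> * t powr (q + 1)"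
    using quadratic_minus_le_powr(2)[OF assms] by blast
  have "C < 2 * ?\<kappa>"
    using \<open>?\<kappa> > C / 2\<close> by linarith
  then have "C * t powr (q + 1) < A * t\<^sup>2 - B"
    unfolding eq by (rule mult_strict_right_mono) (use t in simp)
  with t show "\<exists>t>0. C * t powr (q + 1) < A * t\<^sup>2 - B"
    by blast
qed

lemma DERIV_lin_inv_powr:
  fixes A B C q t :: real
  assumes "t > 0"
  shows "((\<lambda>t. A * t - B / t - C * t powr q)
           has_real_derivative A + B / t\<^sup>2 - C * q * t powr (q - 1)) (at t)"
proof -
  have "((\<lambda>t. A * t - B / t - C * t powr q)
           has_real_derivative A * 1 - (- (B * 1) / t\<^sup>2) - C * (q * t powr (q - 1))) (at t)"
    using assms by (auto intro!: derivative_eq_intros simp: power2_eq_square)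
  then show ?thesis
    by (simp add: algebra_simps)
qed

lemma quadratic_minus_powr_eq_sq_mult:
  fixes A B C q t :: real
  assumes "t > 0"
  shows "A * t\<^sup>2 + B - C * q * t powr (q + 1) = t\<^sup>2 * (A + B / t\<^sup>2 - C * q * t powr (q - 1))"
proof -
  have "t powr (q + 1) = t powr (q - 1 + 2)"
    by (simp add: add.commute)
  also have "\<dots> = t powr (q - 1) * t\<^sup>2"
    using assms by (simp only: powr_add) simp
  finally show ?thesis
    using assms by (simp add: field_simps)
qed

lemma strict_antimono_on_inverse_sq_minus_powr:
  fixes A B C q :: real
  assumes "B > 0" and "C > 0" and "q > 1"
  shows "strict_antimono_on {0<..} (\<lambda>t. A + B / t\<^sup>2 - C * q * t powr (q - 1))"
proof (rule monotone_onI)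
  fix s t :: real assume "s \<in> {0<..}" "t \<in> {0<..}" "s < t"
  then have "B / t\<^sup>2 < B / s\<^sup>2" and "s powr (q - 1) < t powr (q - 1)"
    using assms by (auto intro!: divide_strict_left_mono power_strict_mono powr_less_mono2)
  then show "A + B / t\<^sup>2 - C * q * t powr (q - 1) < A + B / s\<^sup>2 - C * q * s powr (q - 1)"
    using assms by (smt (verit) mult_less_cancel_left_pos mult_pos_pos)
qed

lemma lin_inv_powr_pos_iff:
  fixes A B C q t :: real
  assumes "t > 0"
  shows "A * t - B / t - C * t powr q > 0 \<longleftrightarrow> C * t powr (q + 1) < A * t\<^sup>2 - B"
proof -
  have "A * t - B / t - C * t powr q > 0 \<longleftrightarrow> t * (A * t - B / t - C * t powr q) > 0"
    using assms by (simp add: zero_less_mult_iff)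
  also have "t * (A * t - B / t - C * t powr q) = A * t\<^sup>2 - B - C * t powr (q + 1)"
    using assms by (simp add: powr_add power2_eq_square field_simps)
  finally show ?thesis
    by auto
qed

lemma two_zeros_iff_exists_pos_lin_inv_powr:
  fixes A B C q :: real
  assumes A: "A > 0" and B: "B > 0" and C: "C > 0" and q: "q > 1"
  defines "f \<equiv> \<lambda>t. A * t - B / t - C * t powr q"
      and "\<phi> \<equiv> \<lambda>t. A + B / t\<^sup>2 - C * q * t powr (q - 1)"
  shows "(\<exists>tbar tm tp. 0 < tp \<and> tp < tbar \<and> tbar < tm \<and> f tp = 0 \<and> f tm = 0 \<and>
            \<phi> tp > 0 \<and> \<phi> tm < 0 \<and>
            (\<forall>t. 0 < t \<and> t < tbar \<longrightarrow> \<phi> t > 0) \<and> (\<forall>t. tbar < t \<longrightarrow> \<phi> t < 0))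
         \<longleftrightarrow> (\<exists>t>0. f t > 0)"
proof (rule two_zeros_iff_exists_pos)
  show "(f has_real_derivative \<phi> t) (at t)" if "t > 0" for t
    unfolding f_def \<phi>_def using that by (rule DERIV_lin_inv_powr)
  show "continuous_on {0<..} \<phi>"
    unfolding \<phi>_def by (intro continuous_intros) auto
  show "strict_antimono_on {0<..} \<phi>"
    unfolding \<phi>_def using B C q by (rule strict_antimono_on_inverse_sq_minus_powr)
  show "\<forall>\<^sub>F t in at_right 0. \<phi> t > 0" "\<forall>\<^sub>F t in at_top. \<phi> t < 0"
    unfolding \<phi>_def using A B C q by real_asymp+
  show "\<forall>\<^sub>F t in at_right 0. f t < 0" "\<forall>\<^sub>F t in at_top. f t < 0"
    unfolding f_def using A B C q by real_asymp+
qed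

theorem proposition4p2:
  fixes A B C q :: real
  assumes "A > 0" and "B > 0" and "C > 0" and "q > 1"
  defines "f \<equiv> (\<lambda>t::real. A * t - B / t - C * t powr q)"
      and "g \<equiv> (\<lambda>t::real. A * t\<^sup>2 + B - C * q * t powr (q + 1))"
  shows "(\<exists>tbar tm tp :: real.
            0 < tp \<and> tp < tbar \<and> tbar < tm \<and> f tp = 0 \<and> f tm = 0 \<and>
            deriv f tp > 0 \<and> deriv f tm < 0 \<and>
            (\<forall>t. 0 < t \<and> t < tbar \<longrightarrow> g t > 0) \<and>
            (\<forall>t. tbar < t \<longrightarrow> g t < 0))
         \<longleftrightarrow>
         ((q - 1) powr ((q - 1) / 2) / (q + 1) powr ((q + 1) / 2))
           * (A powr ((q + 1) / 2) / B powr ((q - 1) / 2)) > C / 2"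
proof -
  define \<phi> where "\<phi> = (\<lambda>t::real. A + B / t\<^sup>2 - C * q * t powr (q - 1))"
  have deriv_f: "deriv f t = \<phi> t" if "t > 0" for t
    unfolding f_def \<phi>_def using DERIV_lin_inv_powr[OF that] by (rule DERIV_imp_deriv)
  have g_eq: "g t = t\<^sup>2 * \<phi> t" if "t > 0" for t
    unfolding g_def \<phi>_def using that by (rule quadratic_minus_powr_eq_sq_mult)
  have "(\<exists>tbar tm tp :: real.
            0 < tp \<and> tp < tbar \<and> tbar < tm \<and> f tp = 0 \<and> f tm = 0 \<and>
            deriv f tp > 0 \<and> deriv f tm < 0 \<and>
            (\<forall>t. 0 < t \<and> t < tbar \<longrightarrow> g t > 0) \<and> (\<forall>t. tbar < t \<longrightarrow> g t < 0))
        \<longleftrightarrow> (\<exists>tbar tm tp :: real.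
            0 < tp \<and> tp < tbar \<and> tbar < tm \<and> f tp = 0 \<and> f tm = 0 \<and>
            \<phi> tp > 0 \<and> \<phi> tm < 0 \<and>
            (\<forall>t. 0 < t \<and> t < tbar \<longrightarrow> \<phi> t > 0) \<and> (\<forall>t. tbar < t \<longrightarrow> \<phi> t < 0))"
    by (intro ex_cong1 conj_cong refl)
       (auto simp: deriv_f g_eq zero_less_mult_iff mult_less_0_iff)
  also have "\<dots> \<longleftrightarrow> (\<exists>t>0. f t > 0)"
    unfolding f_def \<phi>_def using assms(1-4) by (rule two_zeros_iff_exists_pos_lin_inv_powr)
  also have "\<dots> \<longleftrightarrow> (\<exists>t>0. C * t powr (q + 1) < A * t\<^sup>2 - B)"
    unfolding f_def using lin_inv_powr_pos_iff by blast
  also have "\<dots> \<longleftrightarrow> ((q - 1) powr ((q - 1) / 2) / (q + 1) powr ((q + 1) / 2))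
           * (A powr ((q + 1) / 2) / B powr ((q - 1) / 2)) > C / 2"
    using assms(1,2,4) by (rule exists_powr_less_quadratic_iff)
  finally show ?thesis .
qed

end
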